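(* Let $\chi$ be a Dirichlet character, $r\ge1$ an integer and $N,w$ positive integers. Put \[C_\chi(N,w,r)=\sum_{\substack{v\ge1\\ N\mid v}}\frac{h_\chi(v)}{\varphi(vw)v^r}.\] Then $C_\chi(N,w,r)=c_\chi(N,w,r)B_\chi(r)$, where \[c_\chi(N,w,r)=\frac{h_\chi(N)\kappa(Nw)}{N^{r+1}w}\prod_{p\mid N}\frac{p^{r+1}}{p^{r+2}-p^{r+1}-p+\chi(p)}\prod_{\substack{p\nmid N\\ p\mid w}}\frac{p^{r+1}-1}{p^{r+2}-p^{r+1}-p+\chi(p)}\] and \[B_\chi(r)=\prod_p\left(1+\frac{p(\chi(p)-1)}{(p-1)(p^{r+1}-\chi(p))}\right),\] $p$ running over rational primes. In particular $C_\chi(1,1,r)=\sum_{v\ge1}\frac{h_\chi(v)}{\varphi(v)v^r}=B_\chi(r)$.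
   Context: For a Dirichlet character $\chi$, $h_\chi=\mu*\chi$, i.e. $h_\chi(n)=\sum_{e\mid n}\mu(e)\chi(n/e)$. $\kappa(n)=\prod_{p\mid n}p$ is the squarefree kernel of $n$. $\varphi$ is Euler's totient function. *)

theory Defs
  imports "HOL-Analysis.Analysis" "HOL-Number_Theory.Number_Theory"
    "HOL-Computational_Algebra.Squarefree"
begin

definition dirichlet_character :: "nat \<Rightarrow> (nat \<Rightarrow> complex) \<Rightarrow> bool" where
  "dirichlet_character m chi \<longleftrightarrow> m > 0 \<and>
     (\<forall>a b. chi (a * b) = chi a * chi b) \<and>
     (\<forall>a. chi (a + m) = chi a) \<and>
     (\<forall>a. chi a \<noteq> 0 \<longleftrightarrow> coprime a m)"

definition moebius :: "nat \<Rightarrow> int" where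
  "moebius n = (if n = 0 \<or> \<not> squarefree n then 0 else (-1) ^ card (prime_factors n))"

definition h_chi :: "(nat \<Rightarrow> complex) \<Rightarrow> nat \<Rightarrow> complex" where
  "h_chi chi n = (\<Sum>e | e dvd n. of_int (moebius e) * chi (n div e))"

definition kappa :: "nat \<Rightarrow> nat" where
  "kappa n = (\<Prod>p\<in>prime_factors n. p)"

definition C_chi :: "(nat \<Rightarrow> complex) \<Rightarrow> nat \<Rightarrow> nat \<Rightarrow> nat \<Rightarrow> complex" where
  "C_chi chi N w r = infsum (\<lambda>v. h_chi chi v / (of_nat (totient (v * w)) * of_nat v ^ r))
                      {v. v \<ge> 1 \<and> N dvd v}"

definition B_factor :: "(nat \<Rightarrow> complex) \<Rightarrow> nat \<Rightarrow> nat \<Rightarrow> complex" where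
  "B_factor chi r p = 1 + of_nat p * (chi p - 1) /
        ((of_nat p - 1) * (of_nat p ^ (r + 1) - chi p))"

definition c_chi :: "(nat \<Rightarrow> complex) \<Rightarrow> nat \<Rightarrow> nat \<Rightarrow> nat \<Rightarrow> complex" where
  "c_chi chi N w r =
     h_chi chi N * of_nat (kappa (N * w)) / (of_nat N ^ (r + 1) * of_nat w) *
     (\<Prod>p\<in>prime_factors N. of_nat p ^ (r + 1) /
        (of_nat p ^ (r + 2) - of_nat p ^ (r + 1) - of_nat p + chi p)) *
     (\<Prod>p\<in>prime_factors w - prime_factors N. (of_nat p ^ (r + 1) - 1) /
        (of_nat p ^ (r + 2) - of_nat p ^ (r + 1) - of_nat p + chi p))"

end

theory Submission
  imports Defs
begin

text \<open>
  Since \<open>h_chi\<close> is multiplicative with \<open>h_chi(p^k) = chi(p)^(k-1) (chi(p) - 1)\<close> for \<open>k \<ge> 1\<close>,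
  the summand of \<open>C_chi(N,w,r)\<close>, extended by zero off the multiples of \<open>N\<close>, is a product
  over the primes \<open>p\<close> of local factors depending only on the exponent of \<open>p\<close> in \<open>v\<close>; for
  exponents \<open>k \<ge> 1\<close> they form a geometric progression in \<open>chi(p)/p^(r+1)\<close>. Each local series
  is \<open>1 + O(p^-2)\<close> in absolute value, so the sum is absolutely convergent, its part over the
  numbers whose prime factors are at most \<open>x\<close> is the finite Euler product of the local sums,
  and these parts exhaust the whole sum as \<open>x \<rightarrow> \<infinity>\<close>. Summing the geometric series, the local
  sum at primes \<open>p\<close> not dividing \<open>N w\<close> is the Euler factor of \<open>B_chi(r)\<close>, and at
  \<open>p | N w\<close> it is that factor times the \<open>p\<close>-component of \<open>c_chi(N,w,r)\<close>.
\<close>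

section \<open>Dirichlet characters\<close>

lemma dirichlet_character_mult:
  "dirichlet_character m chi \<Longrightarrow> chi (a * b) = chi a * chi b"
  by (simp add: dirichlet_character_def)

text \<open>Both forms are stated because the simplifier produces \<open>Suc 0\<close> from \<open>1 :: nat\<close> in some contexts.\<close>

lemma dirichlet_character_1:
  assumes "dirichlet_character m chi"
  shows "chi 1 = 1" and "chi (Suc 0) = 1"
proof -
  have "chi 1 \<noteq> 0"
    using assms by (simp add: dirichlet_character_def)
  moreover have "chi 1 * chi 1 = chi 1 * 1"
    using dirichlet_character_mult[OF assms, of 1 1] by simp
  ultimately show "chi 1 = 1" "chi (Suc 0) = 1"
    by (metis mult_left_cancel One_nat_def)+
qed

lemma dirichlet_character_power:
  assumes "dirichlet_character m chi"
  shows "chi (a ^ k) = chi a ^ k"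
  by (induction k) (simp_all add: dirichlet_character_1[OF assms] dirichlet_character_mult[OF assms])

lemma dirichlet_character_mod:
  assumes "dirichlet_character m chi"
  shows "chi (a mod m) = chi a"
proof -
  have periodic: "chi (b + k * m) = chi b" for b k
  proof (induction k)
    case (Suc k)
    have "chi (b + Suc k * m) = chi ((b + k * m) + m)"
      by (simp add: algebra_simps)
    also have "\<dots> = chi (b + k * m)"
      using assms by (simp add: dirichlet_character_def)
    finally show ?case
      using Suc by simp
  qed simp
  show ?thesis
    using periodic[of "a mod m" "a div m"] by simp
qed

lemma dirichlet_character_norm_le:
  assumes "dirichlet_character m chi"
  shows "norm (chi a) \<le> 1"
proof (cases "chi a = 0")
  case False
  then have "coprime a m" and "m > 0"
    using assms by (simp_all add: dirichlet_character_def)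
  then have "[a ^ totient m = 1] (mod m)"
    by (simp add: euler_theorem del: One_nat_def)
  then have "chi (a ^ totient m) = chi 1"
    by (metis assms cong_def dirichlet_character_mod)
  then have "norm (chi a) ^ totient m = 1"
    by (simp add: dirichlet_character_power[OF assms] dirichlet_character_1[OF assms] flip: norm_power)
  moreover have "totient m > 0"
    using \<open>m > 0\<close> by simp
  ultimately show ?thesis
    using power_eq_imp_eq_base[of "norm (chi a)" "totient m" 1] by simp
qed simp

lemma norm_dirichlet_character_less_power:
  assumes "dirichlet_character m chi" and "prime p" and "k \<ge> 1"
  shows "norm (chi p) < real p ^ k"
proof -
  have "real p \<le> real p ^ k"
    using assms(2,3) prime_ge_1_nat power_increasing[of 1 k "real p"] by simp
  moreover have "real p \<ge> 2"
    using prime_ge_2_nat[OF assms(2)] by simp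
  ultimately show ?thesis
    using dirichlet_character_norm_le[OF assms(1), of p] by linarith
qed

section \<open>The function \<open>h_chi\<close>\<close>

lemma moebius_mult_coprime:
  assumes "coprime a b" "a > 0" "b > 0"
  shows "moebius (a * b) = moebius a * moebius b"
proof (cases "squarefree a \<and> squarefree b")
  case True
  then have "squarefree (a * b)"
    using squarefree_mult_coprime assms by blast
  moreover have "prime_factors (a * b) = prime_factors a \<union> prime_factors b"
    using assms by (simp add: prime_factors_product)
  moreover have "prime_factors a \<inter> prime_factors b = {}"
    using assms(1) by (auto simp: in_prime_factors_iff) (meson coprime_common_divisor not_prime_unit)
  ultimately show ?thesis
    using True assms by (simp add: moebius_def card_Un_disjoint power_add)
next
  case False
  then have "\<not> squarefree (a * b)"
    using squarefree_multD by blast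
  with False show ?thesis
    by (auto simp: moebius_def)
qed

lemma moebius_prime_power:
  assumes "prime p"
  shows "moebius (p ^ i) = (if i = 0 then 1 else if i = 1 then -1 else 0)"
proof -
  have "prime_factors (p ^ i) = (if i = 0 then {} else {p})"
    using assms by (simp add: prime_factorization_prime prime_factors_power)
  moreover have "squarefree (p ^ i) \<longleftrightarrow> i \<le> 1"
    using assms by (auto simp: squarefree_power_iff squarefree_prime)
  ultimately show ?thesis
    using assms by (auto simp: moebius_def)
qed

lemma gcd_mult_gcd_eq_coprime:
  fixes a b e :: nat
  assumes "coprime a b" "e dvd a * b"
  shows "gcd e a * gcd e b = e"
proof (cases "e = 0")
  case False
  define g where "g = gcd e a"
  define e' where "e' = e div g"
  have e: "e = g * e'" and a: "a = g * (a div g)"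
    by (simp_all add: e'_def g_def)
  have "coprime e' (a div g)"
    unfolding e'_def g_def by (rule div_gcd_coprime) (use False in auto)
  moreover have "g * e' dvd g * ((a div g) * b)"
    using assms(2) e a by (metis mult.assoc)
  then have "e' dvd (a div g) * b"
    using False e by simp
  ultimately have "e' dvd gcd e b"
    using e by (simp add: coprime_dvd_mult_right_iff)
  then have "e dvd g * gcd e b"
    using e by simp
  moreover have "g * gcd e b dvd e"
    unfolding g_def using assms(1)
    by (simp add: divides_mult coprime_divisors[of "gcd e a" a "gcd e b" b])
  ultimately show ?thesis
    by (simp add: g_def dvd_antisym)
qed (use assms in simp)

lemma h_chi_mult_coprime:
  assumes chi: "dirichlet_character m chi" and ab: "coprime a b" "a > 0" "b > 0"
  shows "h_chi chi (a * b) = h_chi chi a * h_chi chi b"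
proof -
  let ?S = "{d. d dvd a} \<times> {d. d dvd b}"
  have gcd_factor: "gcd (d1 * d2) a = d1" if "coprime a b" "d1 dvd a" "d2 dvd b" for a b d1 d2 :: nat
    by (metis that coprime_divisors gcd_mult_left_right_cancel gcd_nat.eq_iff gcd_unique_nat)
  have "h_chi chi a * h_chi chi b =
     (\<Sum>(d1,d2)\<in>?S. of_int (moebius d1) * chi (a div d1) * (of_int (moebius d2) * chi (b div d2)))"
    unfolding h_chi_def by (simp add: sum_product sum.cartesian_product)
  also have "\<dots> = (\<Sum>e | e dvd a * b. of_int (moebius e) * chi (a * b div e))"
  proof (rule sum.reindex_bij_witness[where i = "\<lambda>e. (gcd e a, gcd e b)" and j = "\<lambda>(d1,d2). d1 * d2"])
    fix x assume "x \<in> ?S"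
    then obtain d1 d2 where x: "x = (d1, d2)" "d1 dvd a" "d2 dvd b"
      by auto
    then have "coprime d1 d2" "d1 > 0" "d2 > 0"
      using ab coprime_divisors by auto
    moreover have "a * b div (d1 * d2) = (a div d1) * (b div d2)"
      using x by (simp add: div_mult_div_if_dvd)
    ultimately show "of_int (moebius ((\<lambda>(d1,d2). d1 * d2) x)) * chi (a * b div ((\<lambda>(d1,d2). d1 * d2) x))
       = (case x of (d1, d2) \<Rightarrow> of_int (moebius d1) * chi (a div d1) * (of_int (moebius d2) * chi (b div d2)))"
      using x by (simp add: moebius_mult_coprime dirichlet_character_mult[OF chi])
    show "(\<lambda>e. (gcd e a, gcd e b)) ((\<lambda>(d1,d2). d1 * d2) x) = x"
      using x ab gcd_factor[of a b d1 d2] gcd_factor[of b a d2 d1]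
      by (simp add: coprime_commute mult.commute)
    show "(\<lambda>(d1,d2). d1 * d2) x \<in> {e. e dvd a * b}"
      using x by (simp add: mult_dvd_mono)
  next
    fix e assume "e \<in> {e. e dvd a * b}"
    then show "(\<lambda>(d1,d2). d1 * d2) ((\<lambda>e. (gcd e a, gcd e b)) e) = e"
      using gcd_mult_gcd_eq_coprime[OF ab(1)] by simp
    show "(\<lambda>e. (gcd e a, gcd e b)) e \<in> ?S"
      by simp
  qed
  also have "\<dots> = h_chi chi (a * b)"
    by (simp add: h_chi_def)
  finally show ?thesis ..
qed

lemma h_chi_prime_power:
  assumes chi: "dirichlet_character m chi" and p: "prime p"
  shows "h_chi chi (p ^ k) = (if k = 0 then 1 else chi p ^ (k - 1) * (chi p - 1))"
proof -
  have divisors: "{e. e dvd p ^ k} = (\<lambda>i. p ^ i) ` {..k}"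
    using p by (auto simp: divides_primepow_nat le_imp_power_dvd)
  have inj: "inj_on (\<lambda>i. p ^ i) {..k}"
    using prime_gt_1_nat[OF p] by (auto simp: inj_on_def power_inject_exp)
  have "h_chi chi (p ^ k) = (\<Sum>i\<le>k. of_int (moebius (p ^ i)) * chi p ^ (k - i))"
    unfolding h_chi_def divisors using p
    by (auto simp: sum.reindex[OF inj] power_diff prime_gt_0_nat
        dirichlet_character_power[OF chi, symmetric] intro!: sum.cong)
  also have "\<dots> = (\<Sum>i\<in>{..k} \<inter> {0,1}. of_int (moebius (p ^ i)) * chi p ^ (k - i))"
    by (intro sum.mono_neutral_right) (auto simp: moebius_prime_power[OF p])
  also have "\<dots> = (if k = 0 then 1 else chi p ^ (k - 1) * (chi p - 1))"
  proof (cases k)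
    case (Suc j)
    then have "{..k} \<inter> {0,1} = {0,1}"
      by auto
    with Suc show ?thesis
      by (simp add: moebius_prime_power[OF p] algebra_simps)
  qed (simp add: moebius_def)
  finally show ?thesis .
qed

lemma h_chi_1:
  assumes "dirichlet_character m chi"
  shows "h_chi chi 1 = 1" and "h_chi chi (Suc 0) = 1"
  using h_chi_prime_power[OF assms two_is_prime_nat, of 0] by simp_all

lemma prod_prime_power_multiplicity_superset:
  fixes v :: nat
  assumes "v > 0" "finite T" "prime_factors v \<subseteq> T" "\<forall>p\<in>T. prime p"
  shows "(\<Prod>p\<in>T. p ^ multiplicity p v) = v"
proof -
  have "(\<Prod>p\<in>T. p ^ multiplicity p v) = (\<Prod>p\<in>prime_factors v. p ^ multiplicity p v)"
    using assms by (intro prod.mono_neutral_right) (auto simp: prime_factors_multiplicity)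
  also have "\<dots> = v"
    using prime_factorization_nat[OF assms(1)] by simp
  finally show ?thesis .
qed

lemma multiplicative_prod_prime_powers:
  fixes f :: "nat \<Rightarrow> 'a :: comm_monoid_mult"
  assumes mult: "\<And>a b. coprime a b \<Longrightarrow> a > 0 \<Longrightarrow> b > 0 \<Longrightarrow> f (a * b) = f a * f b"
    and "f 1 = 1" and "finite T" and "\<forall>p\<in>T. prime p"
  shows "f (\<Prod>p\<in>T. p ^ g p) = (\<Prod>p\<in>T. f (p ^ g p))"
  using assms(3,4)
proof (induction T rule: finite_induct)
  case (insert q T)
  then have "coprime (q ^ g q) (\<Prod>p\<in>T. p ^ g p)"
    by (intro prod_coprime_right coprime_power_left_iff[THEN iffD2] coprime_power_right_iff[THEN iffD2])
      (auto intro: primes_coprime)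
  moreover have "q ^ g q > 0" "(\<Prod>p\<in>T. p ^ g p) > 0"
    using insert by (simp_all add: prime_gt_0_nat prod_pos)
  ultimately show ?case
    using insert by (simp add: mult)
qed (use \<open>f 1 = 1\<close> in simp)

lemma multiplicative_eq_prod_multiplicity:
  fixes f :: "nat \<Rightarrow> 'a :: comm_monoid_mult"
  assumes "\<And>a b. coprime a b \<Longrightarrow> a > 0 \<Longrightarrow> b > 0 \<Longrightarrow> f (a * b) = f a * f b"
    and "f 1 = 1" and "v > 0" "finite T" "\<forall>p\<in>T. prime p" "prime_factors v \<subseteq> T"
  shows "f v = (\<Prod>p\<in>T. f (p ^ multiplicity p v))"
  using multiplicative_prod_prime_powers[OF assms(1,2,4,5), of "\<lambda>p. multiplicity p v"]
    prod_prime_power_multiplicity_superset[OF assms(3,4,6,5)] by simp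

lemma dvd_iff_multiplicity_le_on:
  fixes N v :: nat
  assumes "N > 0" "v > 0" "\<forall>p\<in>T. prime p" "prime_factors N \<subseteq> T"
  shows "N dvd v \<longleftrightarrow> (\<forall>p\<in>T. multiplicity p N \<le> multiplicity p v)"
proof
  assume "\<forall>p\<in>T. multiplicity p N \<le> multiplicity p v"
  then show "N dvd v"
    using assms by (intro multiplicity_le_imp_dvd) (auto simp: prime_factors_multiplicity)
qed (use assms in \<open>auto intro: dvd_imp_multiplicity_le\<close>)

section \<open>Euler products over smooth numbers\<close>

definition smooth :: "nat set \<Rightarrow> nat set" where
  "smooth P = {v. v \<ge> 1 \<and> prime_factors v \<subseteq> P}"

lemma bij_betw_smooth_exponents:
  assumes fin: "finite P" and primes: "\<forall>p\<in>P. prime p"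
  shows "bij_betw (\<lambda>v. restrict (\<lambda>p. multiplicity p v) P) (smooth P) (P \<rightarrow>\<^sub>E UNIV)"
proof (rule bij_betw_byWitness[where f' = "\<lambda>g. \<Prod>p\<in>P. p ^ g p"])
  show "\<forall>v\<in>smooth P. (\<Prod>p\<in>P. p ^ restrict (\<lambda>p. multiplicity p v) P p) = v"
    using prod_prime_power_multiplicity_superset[OF _ fin _ primes] by (simp add: smooth_def)
  show "\<forall>g\<in>P \<rightarrow>\<^sub>E UNIV. restrict (\<lambda>p. multiplicity p (\<Prod>p\<in>P. p ^ g p)) P = g"
  proof (intro ballI ext)
    fix g :: "nat \<Rightarrow> nat" and q assume "g \<in> P \<rightarrow>\<^sub>E UNIV"
    then show "restrict (\<lambda>p. multiplicity p (\<Prod>p\<in>P. p ^ g p)) P q = g q"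
      using multiplicity_prod_prime_powers[OF fin, of q g] primes
      by (cases "q \<in> P") (auto simp: PiE_def extensional_def)
  qed
  show "(\<lambda>g. \<Prod>p\<in>P. p ^ g p) ` (P \<rightarrow>\<^sub>E UNIV) \<subseteq> smooth P"
  proof clarify
    fix g :: "nat \<Rightarrow> nat"
    have "q \<in> P" if "q \<in> prime_factors (\<Prod>p\<in>P. p ^ g p)" for q
      using that multiplicity_prod_prime_powers[OF fin, of q g] primes
      by (auto simp: prime_factors_multiplicity split: if_splits)
    moreover have "(\<Prod>p\<in>P. p ^ g p) > 0"
      using primes by (simp add: prime_gt_0_nat prod_pos)
    ultimately show "(\<Prod>p\<in>P. p ^ g p) \<in> smooth P"
      by (auto simp: smooth_def Suc_le_eq)
  qed
qed auto

lemma multiplicity_le_self: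
  fixes p v :: nat
  assumes "prime p" "v > 0"
  shows "multiplicity p v \<le> v"
proof -
  have "multiplicity p v < p ^ multiplicity p v"
    using prime_gt_1_nat[OF assms(1)] by (intro power_gt_expt) simp
  also have "\<dots> \<le> v"
    using assms by (intro dvd_imp_le multiplicity_dvd) auto
  finally show ?thesis
    by simp
qed

lemma sum_norm_smooth_le_prod:
  fixes G :: "nat \<Rightarrow> 'a :: real_normed_field" and a :: "nat \<Rightarrow> nat \<Rightarrow> 'a"
  assumes fin: "finite P" and primes: "\<forall>p\<in>P. prime p"
    and G: "\<And>v. v \<in> smooth P \<Longrightarrow> G v = (\<Prod>p\<in>P. a p (multiplicity p v))"
    and bound: "\<And>p K. p \<in> P \<Longrightarrow> (\<Sum>k\<le>K. norm (a p k)) \<le> b p"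
    and F: "finite F" "F \<subseteq> smooth P"
  shows "(\<Sum>v\<in>F. norm (G v)) \<le> prod b P"
proof -
  define e where "e v = restrict (\<lambda>p. multiplicity p v) P" for v
  define K where "K = Max (insert 0 F)"
  have inj: "inj_on e F"
    using bij_betw_smooth_exponents[OF fin primes] F(2)
    unfolding e_def by (metis bij_betw_imp_inj_on inj_on_subset)
  have "multiplicity p v \<le> K" if "p \<in> P" "v \<in> F" for p v
  proof -
    have "v \<ge> 1"
      using that F(2) by (auto simp: smooth_def)
    then have "multiplicity p v \<le> v"
      using primes that by (intro multiplicity_le_self) auto
    also have "v \<le> K"
      using that F(1) by (simp add: K_def)
    finally show ?thesis .
  qed
  \<comment> \<open>The exponent vectors of \<open>F\<close> lie in a box, over which the sum of the products factorises.\<close>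
  then have box: "e ` F \<subseteq> P \<rightarrow>\<^sub>E {..K}"
    by (auto simp: e_def)
  have "(\<Sum>v\<in>F. norm (G v)) = (\<Sum>v\<in>F. \<Prod>p\<in>P. norm (a p (e v p)))"
    using F(2) by (intro sum.cong) (auto simp: G e_def prod_norm intro!: prod.cong)
  also have "\<dots> = (\<Sum>g\<in>e ` F. \<Prod>p\<in>P. norm (a p (g p)))"
    by (simp add: sum.reindex[OF inj])
  also have "\<dots> \<le> (\<Sum>g\<in>P \<rightarrow>\<^sub>E {..K}. \<Prod>p\<in>P. norm (a p (g p)))"
    by (intro sum_mono2 box) (auto simp: finite_PiE fin prod_nonneg)
  also have "\<dots> = (\<Prod>p\<in>P. \<Sum>k\<le>K. norm (a p k))"
    by (rule prod_sum_PiE[symmetric]) (simp_all add: fin)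
  also have "\<dots> \<le> prod b P"
    by (intro prod_mono) (auto simp: bound sum_nonneg)
  finally show ?thesis .
qed

lemma has_sum_smooth_prod:
  fixes G :: "nat \<Rightarrow> complex" and a :: "nat \<Rightarrow> nat \<Rightarrow> complex"
  assumes fin: "finite P" and primes: "\<forall>p\<in>P. prime p"
    and G: "\<And>v. v \<in> smooth P \<Longrightarrow> G v = (\<Prod>p\<in>P. a p (multiplicity p v))"
    and "G summable_on smooth P" and "\<And>p. p \<in> P \<Longrightarrow> a p summable_on UNIV"
  shows "(G has_sum (\<Prod>p\<in>P. infsum (a p) UNIV)) (smooth P)"
proof -
  define e where "e v = restrict (\<lambda>p. multiplicity p v) P" for v
  define F where "F g = (\<Prod>p\<in>P. a p (g p))" for g
  have bij: "bij_betw e (smooth P) (P \<rightarrow>\<^sub>E UNIV)"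
    unfolding e_def by (rule bij_betw_smooth_exponents[OF fin primes])
  have GF: "G v = F (e v)" if "v \<in> smooth P" for v
    using that by (simp add: G F_def e_def)
  have "(\<lambda>v. F (e v)) summable_on smooth P"
    using assms(4) GF summable_on_cong by metis
  then have summable: "F summable_on P \<rightarrow>\<^sub>E UNIV"
    using summable_on_reindex_bij_betw[OF bij] by blast
  have "infsum F (P \<rightarrow>\<^sub>E UNIV) = (\<Prod>p\<in>P. infsum (a p) UNIV)"
    unfolding F_def by (rule infsum_prod_PiE[OF fin]) (use assms(5) summable[unfolded F_def] in auto)
  then have "(F has_sum (\<Prod>p\<in>P. infsum (a p) UNIV)) (P \<rightarrow>\<^sub>E UNIV)"
    using summable has_sum_infsum by metis
  then have "((\<lambda>v. F (e v)) has_sum (\<Prod>p\<in>P. infsum (a p) UNIV)) (smooth P)"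
    using has_sum_reindex_bij_betw[OF bij] by blast
  then show ?thesis
    using GF has_sum_cong by metis
qed

lemma tendsto_infsum_greaterThan:
  fixes g :: "nat \<Rightarrow> real"
  assumes "g summable_on UNIV"
  shows "(\<lambda>x. infsum g {x<..}) \<longlonglongrightarrow> 0"
proof -
  have tail: "infsum g {x<..} = infsum g UNIV - (\<Sum>n<Suc x. g n)" for x
  proof -
    have "infsum g ({..<Suc x} \<union> {x<..}) = infsum g {..<Suc x} + infsum g {x<..}"
      by (rule infsum_Un_disjoint) (auto intro: summable_on_subset_banach[OF assms])
    moreover have "{..<Suc x} \<union> {x<..} = UNIV"
      by auto
    ultimately show ?thesis
      by (simp add: algebra_simps)
  qed
  have "(\<lambda>x. \<Sum>n<Suc x. g n) \<longlonglongrightarrow> infsum g UNIV"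
    using LIMSEQ_Suc[OF has_sum_imp_sums[OF has_sum_infsum[OF assms], unfolded sums_def]] .
  from tendsto_diff[OF tendsto_const this, of "infsum g UNIV"] show ?thesis
    by (simp only: tail diff_self)
qed

lemma tendsto_infsum_smooth:
  fixes G :: "nat \<Rightarrow> complex"
  assumes summable: "G summable_on {v. v \<ge> 1}"
  shows "(\<lambda>x. infsum G (smooth {p. prime p \<and> p \<le> x})) \<longlonglongrightarrow> infsum G {v. v \<ge> 1}"
proof -
  define A where "A = {v::nat. v \<ge> 1}"
  define P where "P x = {p. prime p \<and> p \<le> x}" for x :: nat
  define g where "g n = (if n \<ge> 1 then norm (G n) else 0)" for n :: nat
  have norm_summable: "(\<lambda>v. norm (G v)) summable_on A"
    using summable summable_on_iff_abs_summable_on_complex A_def by blast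
  moreover have "(\<lambda>v. norm (G v)) summable_on A \<longleftrightarrow> g summable_on UNIV"
    by (rule summable_on_cong_neutral) (auto simp: g_def A_def)
  ultimately have "g summable_on UNIV"
    by simp
  note tail = tendsto_infsum_greaterThan[OF this]
  have smooth_sub: "smooth (P x) \<subseteq> A" for x
    by (auto simp: smooth_def A_def)
  \<comment> \<open>Every \<open>v \<le> x\<close> lies in \<open>smooth (P x)\<close>, so the remainder is dominated by the tail beyond \<open>x\<close>.\<close>
  have rest_sub: "A - smooth (P x) \<subseteq> {x<..}" for x
  proof
    fix v assume v: "v \<in> A - smooth (P x)"
    then obtain q where "q dvd v" "\<not> q \<le> x"
      by (auto simp: A_def smooth_def P_def in_prime_factors_iff)
    moreover have "v > 0"
      using v by (simp add: A_def)
    with \<open>q dvd v\<close> have "q \<le> v"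
      by (rule dvd_imp_le)
    with \<open>\<not> q \<le> x\<close> show "v \<in> {x<..}"
      by simp
  qed
  have "norm (infsum G A - infsum G (smooth (P x))) \<le> infsum g {x<..}" for x
  proof -
    have "infsum G (smooth (P x) \<union> (A - smooth (P x))) =
        infsum G (smooth (P x)) + infsum G (A - smooth (P x))"
      using smooth_sub[of x]
      by (intro infsum_Un_disjoint) (auto intro: summable_on_subset_banach[OF summable[folded A_def]])
    moreover have "smooth (P x) \<union> (A - smooth (P x)) = A"
      using smooth_sub[of x] by blast
    ultimately have "infsum G A = infsum G (smooth (P x)) + infsum G (A - smooth (P x))"
      by simp
    then have "norm (infsum G A - infsum G (smooth (P x))) = norm (infsum G (A - smooth (P x)))"
      by simp
    also have "\<dots> \<le> infsum (\<lambda>v. norm (G v)) (A - smooth (P x))"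
      by (rule norm_infsum_bound, rule summable_on_subset_banach[OF norm_summable]) blast
    also have "\<dots> = infsum g (A - smooth (P x))"
      by (intro infsum_cong) (auto simp: g_def A_def)
    also have "\<dots> \<le> infsum g {x<..}"
      using \<open>g summable_on UNIV\<close> rest_sub
      by (intro infsum_mono2) (auto simp: g_def intro: summable_on_subset_banach)
    finally show ?thesis .
  qed
  then have "(\<lambda>x. infsum G A - infsum G (smooth (P x))) \<longlonglongrightarrow> 0"
    by (intro Lim_null_comparison[OF _ tail]) auto
  from tendsto_diff[OF tendsto_const this, of "infsum G A"] show ?thesis
    by (simp add: A_def P_def)
qed

lemma prod_one_plus_inverse_square_le:
  fixes C :: real
  assumes "C \<ge> 0" "finite P"
  shows "(\<Prod>p\<in>P. 1 + C / real p ^ 2) \<le> exp (C * (\<Sum>n. inverse (real n ^ 2)))"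
proof -
  have "(\<Prod>p\<in>P. 1 + C / real p ^ 2) \<le> (\<Prod>p\<in>P. exp (C * inverse (real p ^ 2)))"
    using assms(1) by (intro prod_mono) (auto simp: field_simps intro: order_trans[OF _ exp_ge_add_one_self])
  also have "\<dots> = exp (C * (\<Sum>p\<in>P. inverse (real p ^ 2)))"
    by (simp add: exp_sum assms(2) sum_distrib_left)
  also have "\<dots> \<le> exp (C * (\<Sum>n. inverse (real n ^ 2)))"
    using assms inverse_power_summable[of 2, where 'a = real]
    by (intro exp_mono mult_left_mono sum_le_suminf) auto
  finally show ?thesis .
qed

lemma summable_on_if_sum_norm_bounded:
  fixes a :: "nat \<Rightarrow> 'a :: banach"
  assumes "\<And>K. (\<Sum>k\<le>K. norm (a k)) \<le> B"
  shows "a summable_on UNIV"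
proof (rule norm_summable_imp_summable_on)
  show "summable (\<lambda>k. norm (a k))"
    using assms by (intro bounded_imp_summable) auto
qed

lemma summable_on_Euler_factorization:
  fixes G :: "nat \<Rightarrow> complex" and a :: "nat \<Rightarrow> nat \<Rightarrow> complex" and C :: real
  assumes S: "finite S" "\<forall>p\<in>S. prime p"
    and G: "\<And>P v. finite P \<Longrightarrow> \<forall>p\<in>P. prime p \<Longrightarrow> S \<subseteq> P \<Longrightarrow> v \<in> smooth P \<Longrightarrow>
              G v = (\<Prod>p\<in>P. a p (multiplicity p v))"
    and bound: "\<And>p K. prime p \<Longrightarrow> (\<Sum>k\<le>K. norm (a p k)) \<le> 1 + C / real p ^ 2"
    and "C \<ge> 0"
  shows "G summable_on {v. v \<ge> 1}"
proof -
  have "(\<lambda>v. norm (G v)) summable_on {v. v \<ge> 1}"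
  proof (rule nonneg_bdd_above_summable_on)
    show "bdd_above (sum (\<lambda>v. norm (G v)) ` {F. F \<subseteq> {v. v \<ge> 1} \<and> finite F})"
    proof (rule bdd_aboveI2)
      fix F :: "nat set" assume F: "F \<in> {F. F \<subseteq> {v. v \<ge> 1} \<and> finite F}"
      define P where "P = S \<union> \<Union> (prime_factors ` F)"
      have P: "finite P" "\<forall>p\<in>P. prime p" "S \<subseteq> P"
        using S F by (auto simp: P_def)
      have "F \<subseteq> smooth P"
        using F by (auto simp: smooth_def P_def)
      have "(\<Sum>v\<in>F. norm (G v)) \<le> (\<Prod>p\<in>P. 1 + C / real p ^ 2)"
      proof (rule sum_norm_smooth_le_prod[of P G a])
        show "G v = (\<Prod>p\<in>P. a p (multiplicity p v))" if "v \<in> smooth P" for v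
          using G P that by blast
      qed (use F bound P \<open>F \<subseteq> smooth P\<close> in auto)
      also have "\<dots> \<le> exp (C * (\<Sum>n. inverse (real n ^ 2)))"
        using \<open>C \<ge> 0\<close> P(1) by (rule prod_one_plus_inverse_square_le)
      finally show "(\<Sum>v\<in>F. norm (G v)) \<le> exp (C * (\<Sum>n. inverse (real n ^ 2)))" .
    qed
  qed auto
  then show ?thesis
    using summable_on_iff_abs_summable_on_complex by blast
qed

lemma eventually_subset_primes_le:
  assumes "finite S" "\<forall>p\<in>S. prime p"
  shows "eventually (\<lambda>x. S \<subseteq> {p. prime p \<and> p \<le> x}) sequentially"
  using eventually_ge_at_top[of "Max (insert 0 S)"]
proof eventually_elim
  case (elim x)
  have "p \<le> x" if "p \<in> S" for p
    using assms(1) that elim by (meson Max_ge finite_insert insertCI le_trans)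
  then show ?case
    using assms(2) by auto
qed

theorem Euler_product:
  fixes G :: "nat \<Rightarrow> complex" and a :: "nat \<Rightarrow> nat \<Rightarrow> complex" and C :: real
  assumes S: "finite S" "\<forall>p\<in>S. prime p"
    and G: "\<And>P v. finite P \<Longrightarrow> \<forall>p\<in>P. prime p \<Longrightarrow> S \<subseteq> P \<Longrightarrow> v \<in> smooth P \<Longrightarrow>
              G v = (\<Prod>p\<in>P. a p (multiplicity p v))"
    and bound: "\<And>p K. prime p \<Longrightarrow> (\<Sum>k\<le>K. norm (a p k)) \<le> 1 + C / real p ^ 2"
    and "C \<ge> 0"
  shows "(\<lambda>x. \<Prod>p | prime p \<and> p \<le> x. infsum (a p) UNIV) \<longlonglongrightarrow> infsum G {v. v \<ge> 1}"
proof -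
  define P where "P x = {p. prime p \<and> p \<le> x}" for x :: nat
  have summable: "G summable_on {v. v \<ge> 1}"
    using summable_on_Euler_factorization[OF assms] .
  have "eventually (\<lambda>x. S \<subseteq> P x) sequentially"
    unfolding P_def using S by (rule eventually_subset_primes_le)
  then have "eventually (\<lambda>x. infsum G (smooth (P x)) = (\<Prod>p\<in>P x. infsum (a p) UNIV)) sequentially"
  proof eventually_elim
    case (elim x)
    have "finite (P x)" "\<forall>p\<in>P x. prime p"
      by (auto simp: P_def)
    moreover have "G summable_on smooth (P x)"
      using summable by (rule summable_on_subset_banach) (auto simp: smooth_def)
    moreover have "a p summable_on UNIV" if "p \<in> P x" for p
      using bound that by (intro summable_on_if_sum_norm_bounded) (auto simp: P_def)
    ultimately show ?case
      using elim G by (intro infsumI has_sum_smooth_prod) auto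
  qed
  with tendsto_infsum_smooth[OF summable] show ?thesis
    unfolding P_def by (rule Lim_transform_eventually)
qed

section \<open>The local factors\<close>

text \<open>\<open>C_chi\<close> sums over the multiples of \<open>N\<close>; extended by zero to all \<open>v \<ge> 1\<close>, the summand
  factors over the primes (\<open>C_summand_eq_prod_local_factor\<close>).\<close>

definition C_summand :: "(nat \<Rightarrow> complex) \<Rightarrow> nat \<Rightarrow> nat \<Rightarrow> nat \<Rightarrow> nat \<Rightarrow> complex" where
  "C_summand chi N w r v =
     (if N dvd v then h_chi chi v / (of_nat (totient (v * w)) * of_nat v ^ r) else 0)"

definition local_factor :: "(nat \<Rightarrow> complex) \<Rightarrow> nat \<Rightarrow> nat \<Rightarrow> nat \<Rightarrow> nat \<Rightarrow> nat \<Rightarrow> complex" where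
  "local_factor chi N w r p k =
     (if multiplicity p N \<le> k
      then h_chi chi (p ^ k) / (of_nat (totient (p ^ (k + multiplicity p w))) * of_nat p ^ (k * r))
      else 0)"

lemma has_sum_C_summand_iff:
  "(C_summand chi N w r has_sum s) {v. v \<ge> 1} \<longleftrightarrow>
   ((\<lambda>v. h_chi chi v / (of_nat (totient (v * w)) * of_nat v ^ r)) has_sum s) {v. v \<ge> 1 \<and> N dvd v}"
  by (rule has_sum_cong_neutral) (auto simp: C_summand_def)

lemma C_summand_eq_prod_local_factor:
  assumes chi: "dirichlet_character m chi" and "N > 0" "w > 0"
    and T: "finite T" "\<forall>p\<in>T. prime p" "prime_factors (N * w) \<subseteq> T" and v: "v \<in> smooth T"
  shows "C_summand chi N w r v = (\<Prod>p\<in>T. local_factor chi N w r p (multiplicity p v))"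
proof -
  have "v > 0" and v_T: "prime_factors v \<subseteq> T"
    using v by (auto simp: smooth_def)
  have N_T: "prime_factors N \<subseteq> T" and w_T: "prime_factors w \<subseteq> T"
    using T(3) assms(2,3) by (auto simp: prime_factors_product)
  have h: "h_chi chi v = (\<Prod>p\<in>T. h_chi chi (p ^ multiplicity p v))"
    using \<open>v > 0\<close> T(1,2) v_T
    by (intro multiplicative_eq_prod_multiplicity) (auto simp: h_chi_mult_coprime[OF chi] h_chi_1[OF chi])
  have "totient (v * w) = (\<Prod>p\<in>T. totient (p ^ multiplicity p (v * w)))"
    using \<open>v > 0\<close> assms(3) T(1,2) w_T v_T
    by (intro multiplicative_eq_prod_multiplicity) (auto simp: totient_mult_coprime prime_factors_product)
  also have "\<dots> = (\<Prod>p\<in>T. totient (p ^ (multiplicity p v + multiplicity p w)))"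
    using T(2) \<open>v > 0\<close> assms(3)
    by (intro prod.cong) (simp_all add: prime_elem_multiplicity_mult_distrib)
  finally have tot: "(of_nat (totient (v * w)) :: complex) =
      (\<Prod>p\<in>T. of_nat (totient (p ^ (multiplicity p v + multiplicity p w))))"
    by simp
  have "(of_nat v :: complex) = of_nat (\<Prod>p\<in>T. p ^ multiplicity p v)"
    using prod_prime_power_multiplicity_superset[OF \<open>v > 0\<close> T(1) v_T T(2)] by simp
  also have "\<dots> = (\<Prod>p\<in>T. of_nat p ^ multiplicity p v)"
    by (simp only: of_nat_prod of_nat_power)
  finally have "(of_nat v :: complex) = (\<Prod>p\<in>T. of_nat p ^ multiplicity p v)" .
  then have pow: "(of_nat v :: complex) ^ r = (\<Prod>p\<in>T. of_nat p ^ (multiplicity p v * r))"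
    by (simp add: prod_power_distrib power_mult)
  have dvd: "N dvd v \<longleftrightarrow> (\<forall>p\<in>T. multiplicity p N \<le> multiplicity p v)"
    using assms(2) \<open>v > 0\<close> T(2) N_T by (rule dvd_iff_multiplicity_le_on)
  show ?thesis
  proof (cases "N dvd v")
    case True
    then show ?thesis
      using dvd by (simp add: C_summand_def local_factor_def h tot pow prod_dividef
          prod.distrib[symmetric] cong: prod.cong)
  next
    case False
    then obtain p where "p \<in> T" "\<not> multiplicity p N \<le> multiplicity p v"
      using dvd by auto
    then show ?thesis
      using False T(1) by (simp add: C_summand_def local_factor_def prod_zero_iff) blast
  qed
qed

lemma local_factor_0:
  assumes "dirichlet_character m chi"
  shows "local_factor chi N w r p 0 =
           (if multiplicity p N = 0 then 1 / of_nat (totient (p ^ multiplicity p w)) else 0)"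
  by (simp add: local_factor_def h_chi_1[OF assms])

lemma local_factor_Suc:
  assumes chi: "dirichlet_character m chi" and p: "prime p"
  shows "local_factor chi N w r p (Suc j) =
           (if multiplicity p N \<le> Suc j
            then (chi p - 1) * of_nat p / (of_nat p ^ multiplicity p w * (of_nat p - 1) * of_nat p ^ (r + 1))
                 * (chi p / of_nat p ^ (r + 1)) ^ j
            else 0)"
proof (cases "multiplicity p N \<le> Suc j")
  case True
  define b where "b = multiplicity p w"
  define P where "P = (of_nat p :: complex)"
  have "P \<noteq> 0" "P - 1 \<noteq> 0"
    using prime_gt_1_nat[OF p] by (auto simp: P_def of_nat_diff)
  have h: "h_chi chi (p ^ Suc j) = chi p ^ j * (chi p - 1)"
    using h_chi_prime_power[OF chi p, of "Suc j"] by simp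
  have tot: "of_nat (totient (p ^ (Suc j + b))) = P ^ (j + b) * (P - 1)"
    using totient_prime_power[OF p, of "Suc j + b"] prime_gt_1_nat[OF p] by (simp add: P_def of_nat_diff)
  have "local_factor chi N w r p (Suc j) =
          h_chi chi (p ^ Suc j) / (of_nat (totient (p ^ (Suc j + b))) * P ^ (Suc j * r))"
    unfolding local_factor_def b_def P_def by (rule if_P[OF True])
  also have "\<dots> = chi p ^ j * (chi p - 1) / (P ^ (j + b) * (P - 1) * P ^ (Suc j * r))"
    unfolding h tot ..
  also have "\<dots> = (chi p - 1) * P / (P ^ b * (P - 1) * P ^ (r + 1)) * (chi p / P ^ (r + 1)) ^ j"
    using \<open>P \<noteq> 0\<close> \<open>P - 1 \<noteq> 0\<close> by (simp add: field_simps power_add power_mult_distrib flip: power_mult)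
  finally show ?thesis
    using True by (simp add: P_def b_def)
qed (simp add: local_factor_def)

lemma norm_of_nat_minus_1:
  "n \<ge> 1 \<Longrightarrow> norm ((of_nat n :: 'a :: real_normed_algebra_1) - 1) = real n - 1"
  by (metis norm_of_nat of_nat_1 of_nat_diff of_nat_le_iff)

lemma norm_local_factor_Suc_le:
  assumes chi: "dirichlet_character m chi" and p: "prime p" and "r \<ge> 1"
  shows "norm (local_factor chi N w r p (Suc j)) \<le> 4 * (1 / real p ^ 2) ^ Suc j"
proof -
  define P where "P = real p"
  define X where "X = P ^ (r + 1)"
  have P: "P \<ge> 2"
    using prime_ge_2_nat[OF p] by (simp add: P_def)
  have X: "X \<ge> P ^ 2"
    unfolding X_def using P \<open>r \<ge> 1\<close> by (intro power_increasing) auto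
  then have "X > 0"
    using P by (smt (verit) zero_less_power)
  have "norm (chi p) \<le> 1" and "norm (chi p - 1) \<le> 2"
    using dirichlet_character_norm_le[OF chi, of p] norm_triangle_ineq4[of "chi p" 1] by auto
  have "norm (local_factor chi N w r p (Suc j)) \<le>
     norm (chi p - 1) * P / (P ^ multiplicity p w * (P - 1) * X) * (norm (chi p) / X) ^ j"
    using prime_ge_1_nat[OF p]
    by (simp add: local_factor_Suc[OF chi p] norm_mult norm_divide norm_power norm_of_nat_minus_1 P_def X_def)
  also have "\<dots> \<le> 2 * P / (1 * (P - 1) * X) * (1 / X) ^ j"
    using \<open>norm (chi p) \<le> 1\<close> \<open>norm (chi p - 1) \<le> 2\<close> P \<open>X > 0\<close>
    by (intro mult_mono frac_le divide_right_mono power_mono) auto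
  also have "\<dots> = (2 * P / (P - 1)) / X ^ Suc j"
    using P \<open>X > 0\<close> by (simp add: field_simps)
  also have "\<dots> \<le> 4 / (P ^ 2) ^ Suc j"
    using P X by (intro frac_le power_mono) (auto simp: field_simps)
  finally show ?thesis
    by (simp add: P_def power_one_over)
qed

lemma sum_norm_local_factor_le:
  assumes chi: "dirichlet_character m chi" and p: "prime p" and "r \<ge> 1"
  shows "(\<Sum>k\<le>K. norm (local_factor chi N w r p k)) \<le> 1 + 8 / real p ^ 2"
proof -
  define x where "x = 1 / real p ^ 2"
  have "real p ^ 2 \<ge> 2 ^ 2"
    using prime_ge_2_nat[OF p] by (intro power_mono) auto
  then have x: "x > 0" "x \<le> 1/4"
    unfolding x_def using prime_gt_0_nat[OF p] by (auto intro: divide_left_mono)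
  have "norm (local_factor chi N w r p 0) \<le> 1"
    using p by (auto simp: local_factor_0[OF chi] norm_divide divide_le_eq Suc_le_eq prime_gt_0_nat)
  then have "(\<Sum>k\<le>K. norm (local_factor chi N w r p k)) \<le> 1 + (\<Sum>j<K. 4 * x * x ^ j)"
    unfolding sum.atMost_shift using norm_local_factor_Suc_le[OF assms]
    by (intro add_mono sum_mono) (simp_all add: x_def mult.assoc)
  also have "(\<Sum>j<K. 4 * x * x ^ j) = 4 * x * ((1 - x ^ K) / (1 - x))"
    using x by (simp add: sum_distrib_left[symmetric] sum_gp_strict)
  also have "\<dots> \<le> 4 * x * (1 / (1 - x))"
    using x by (intro mult_left_mono divide_right_mono) auto
  also have "\<dots> \<le> 8 * x"
    using x by (simp add: field_simps)
  finally show ?thesis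
    by (simp add: x_def)
qed

lemma has_sum_local_factor:
  fixes N w :: nat
  assumes chi: "dirichlet_character m chi" and p: "prime p" and r: "r \<ge> 1"
  defines "\<alpha> \<equiv> multiplicity p N" and "\<beta> \<equiv> multiplicity p w"
    and "q \<equiv> chi p / of_nat p ^ (r + 1)"
    and "c \<equiv> (chi p - 1) * of_nat p / (of_nat p ^ multiplicity p w * (of_nat p - 1) * of_nat p ^ (r + 1))"
  shows "(local_factor chi N w r p has_sum
           (if \<alpha> = 0 then 1 / of_nat (totient (p ^ \<beta>)) + c / (1 - q) else c * q ^ (\<alpha> - 1) / (1 - q))) UNIV"
proof -
  define f where "f = local_factor chi N w r p"
  have f_Suc: "f (Suc j) = (if \<alpha> \<le> Suc j then c * q ^ j else 0)" for j
    unfolding f_def local_factor_Suc[OF chi p] \<alpha>_def c_def q_def ..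
  have f_0: "f 0 = (if \<alpha> = 0 then 1 / of_nat (totient (p ^ \<beta>)) else 0)"
    unfolding f_def local_factor_0[OF chi] \<alpha>_def \<beta>_def ..
  have "norm q < 1"
    using norm_dirichlet_character_less_power[OF chi p, of "r + 1"] prime_gt_0_nat[OF p]
    by (simp add: q_def norm_divide norm_mult norm_power divide_less_eq)
  then have geometric: "(\<lambda>j. a * q ^ j) sums (a / (1 - q))" for a
    using sums_mult[OF geometric_sums, of q a] by simp
  have "f sums (if \<alpha> = 0 then 1 / of_nat (totient (p ^ \<beta>)) + c / (1 - q) else c * q ^ (\<alpha> - 1) / (1 - q))"
  proof (cases \<alpha>)
    case 0
    then have "(\<lambda>j. f (Suc j)) sums (c / (1 - q))"
      using geometric by (simp add: f_Suc)
    then have "f sums (c / (1 - q) + f 0)"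
      by (simp only: sums_Suc_iff)
    then show ?thesis
      using 0 f_0 by (simp add: add.commute)
  next
    case (Suc a)
    then have "(\<lambda>j. f (j + Suc a)) = (\<lambda>j. (c * q ^ a) * q ^ j)"
      by (simp add: fun_eq_iff f_Suc power_add mult_ac)
    then have "(\<lambda>j. f (j + Suc a)) sums (c * q ^ a / (1 - q))"
      using geometric by simp
    then have "f sums (c * q ^ a / (1 - q) + (\<Sum>j<Suc a. f j))"
      by (simp only: sums_iff_shift)
    moreover have "(\<Sum>j<Suc a. f j) = 0"
      using Suc by (intro sum.neutral) (auto simp: f_0 f_Suc less_Suc_eq_0_disj)
    ultimately show ?thesis
      using Suc by simp
  qed
  moreover have "summable (\<lambda>k. norm (f k))"
    using sum_norm_local_factor_le[OF chi p r] unfolding f_def by (intro bounded_imp_summable) auto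
  ultimately show ?thesis
    unfolding f_def by (rule norm_summable_imp_has_sum[rotated])
qed

section \<open>The constants \<open>B_chi\<close> and \<open>c_chi\<close>\<close>

lemma prime_power_minus_dirichlet_character_nonzero:
  assumes chi: "dirichlet_character m chi" and p: "prime p" and "k \<ge> 1"
  shows "(of_nat p :: complex) ^ k - chi p \<noteq> 0"
proof
  assume "(of_nat p :: complex) ^ k - chi p = 0"
  then have "norm (chi p) = real p ^ k"
    by (metis eq_iff_diff_eq_0 norm_of_nat norm_power)
  with norm_dirichlet_character_less_power[OF assms] show False
    by simp
qed

lemma c_chi_denominator_nonzero:
  assumes chi: "dirichlet_character m chi" and p: "prime p" and "r \<ge> 1"
  shows "(of_nat p :: complex) ^ (r + 2) - of_nat p ^ (r + 1) - of_nat p + chi p \<noteq> 0"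
proof
  define P where "P = real p"
  have "P \<ge> 2"
    using prime_ge_2_nat[OF p] by (simp add: P_def)
  have "P ^ (r + 1) \<ge> P ^ 2"
    using \<open>P \<ge> 2\<close> \<open>r \<ge> 1\<close> by (intro power_increasing) auto
  then have "P ^ (r + 1) * (P - 1) \<ge> P ^ 2 * (P - 1)"
    using \<open>P \<ge> 2\<close> by (intro mult_right_mono) auto
  moreover have "P * (P - 1) \<ge> 2 * 1"
    using \<open>P \<ge> 2\<close> by (intro mult_mono) auto
  then have "P * (P * (P - 1) - 1) \<ge> 2 * 1"
    using \<open>P \<ge> 2\<close> by (intro mult_mono) auto
  ultimately have big: "P ^ (r + 2) - P ^ (r + 1) - P \<ge> 2"
    by (simp add: algebra_simps power2_eq_square)
  assume "(of_nat p :: complex) ^ (r + 2) - of_nat p ^ (r + 1) - of_nat p + chi p = 0"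
  then have "chi p = - of_real (P ^ (r + 2) - P ^ (r + 1) - P)"
    by (simp add: P_def algebra_simps)
  then have "norm (chi p) = P ^ (r + 2) - P ^ (r + 1) - P"
    using big by (simp only: norm_minus_cancel norm_of_real)
  then show False
    using big dirichlet_character_norm_le[OF chi, of p] by simp
qed

lemma B_factor_eq:
  assumes chi: "dirichlet_character m chi" and p: "prime p"
  shows "B_factor chi r p = ((of_nat p :: complex) ^ (r + 2) - of_nat p ^ (r + 1) - of_nat p + chi p) /
                            ((of_nat p - 1) * (of_nat p ^ (r + 1) - chi p))"
proof -
  have "(of_nat p :: complex) - 1 \<noteq> 0"
    using prime_gt_1_nat[OF p] by (auto simp: of_nat_diff)
  moreover have "(of_nat p :: complex) ^ (r + 1) - chi p \<noteq> 0"
    using prime_power_minus_dirichlet_character_nonzero[OF chi p, of "r + 1"] by simp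
  ultimately have "B_factor chi r p = ((of_nat p - 1) * (of_nat p ^ (r + 1) - chi p) + of_nat p * (chi p - 1)) /
                                      ((of_nat p - 1) * (of_nat p ^ (r + 1) - chi p))"
    unfolding B_factor_def by (simp add: add_divide_distrib)
  also have "(of_nat p - 1) * (of_nat p ^ (r + 1) - chi p) + of_nat p * (chi p - 1) =
             (of_nat p :: complex) ^ (r + 2) - of_nat p ^ (r + 1) - of_nat p + chi p"
    by (simp add: algebra_simps power_add)
  finally show ?thesis .
qed

text \<open>The \<open>p\<close>-component of \<open>c_chi(N,w,r)\<close>: the factor \<open>p\<close> of \<open>kappa(N w)\<close>, the \<open>p\<close>-parts of
  \<open>h_chi(N)\<close> and of \<open>N^(r+1) w\<close>, and the factor at \<open>p\<close> of the two products.\<close>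

definition c_chi_factor :: "(nat \<Rightarrow> complex) \<Rightarrow> nat \<Rightarrow> nat \<Rightarrow> nat \<Rightarrow> nat \<Rightarrow> complex" where
  "c_chi_factor chi N w r p =
     h_chi chi (p ^ multiplicity p N) * of_nat p /
       ((of_nat p ^ multiplicity p N) ^ (r + 1) * of_nat p ^ multiplicity p w) *
     (if p \<in> prime_factors N
      then of_nat p ^ (r + 1) / (of_nat p ^ (r + 2) - of_nat p ^ (r + 1) - of_nat p + chi p)
      else (of_nat p ^ (r + 1) - 1) / (of_nat p ^ (r + 2) - of_nat p ^ (r + 1) - of_nat p + chi p))"

lemma has_sum_local_factor_eq:
  assumes chi: "dirichlet_character m chi" and p: "prime p" and r: "r \<ge> 1" and "N > 0" "w > 0"
  shows "(local_factor chi N w r p has_sum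
           ((if p \<in> prime_factors (N * w) then c_chi_factor chi N w r p else 1) * B_factor chi r p)) UNIV"
proof -
  define P where "P = (of_nat p :: complex)"
  define X where "X = P ^ (r + 1)"
  define D where "D = P ^ (r + 2) - P ^ (r + 1) - P + chi p"
  have nonzero: "P \<noteq> 0" "P - 1 \<noteq> 0" "X \<noteq> 0" "X - chi p \<noteq> 0" "D \<noteq> 0"
    using prime_gt_1_nat[OF p] prime_power_minus_dirichlet_character_nonzero[OF chi p, of "r + 1"]
      c_chi_denominator_nonzero[OF chi p r]
    by (auto simp: P_def X_def D_def of_nat_diff)
  have power_nonzero: "P ^ k \<noteq> 0" for k
    using nonzero by simp
  have B: "B_factor chi r p = D / ((P - 1) * (X - chi p))"
    unfolding B_factor_eq[OF chi p] D_def P_def X_def ..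
  have q: "1 - chi p / X = (X - chi p) / X"
    using nonzero by (simp add: field_simps)
  have pf_N: "p \<in> prime_factors N \<longleftrightarrow> multiplicity p N > 0"
    using p by (simp add: prime_factors_multiplicity)
  have pf_Nw: "p \<in> prime_factors (N * w) \<longleftrightarrow> multiplicity p N > 0 \<or> multiplicity p w > 0"
    using assms(4,5) p by (simp add: prime_factors_multiplicity prime_elem_multiplicity_mult_distrib)
  have local_sum: "(local_factor chi N w r p has_sum
      (if multiplicity p N = 0
       then 1 / of_nat (totient (p ^ multiplicity p w)) +
            (chi p - 1) * P / (P ^ multiplicity p w * (P - 1) * X) / ((X - chi p) / X)
       else (chi p - 1) * P / (P ^ multiplicity p w * (P - 1) * X) * (chi p / X) ^ (multiplicity p N - 1)
            / ((X - chi p) / X))) UNIV"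
    using has_sum_local_factor[OF chi p r, of N w] unfolding P_def[symmetric] X_def[symmetric] q .
  consider (N) a where "multiplicity p N = Suc a"
    | (w) b where "multiplicity p N = 0" "multiplicity p w = Suc b"
    | (none) "multiplicity p N = 0" "multiplicity p w = 0"
    by (metis not0_implies_Suc)
  then show ?thesis
  proof cases
    case (N a)
    have "p \<in> prime_factors N"
      using N pf_N by simp
    have h: "h_chi chi (p ^ multiplicity p N) = chi p ^ a * (chi p - 1)"
      using h_chi_prime_power[OF chi p, of "Suc a"] unfolding N by simp
    have X_power: "(P ^ multiplicity p N) ^ (r + 1) = X * X ^ a"
      unfolding N X_def power_Suc by (simp add: power_mult_distrib mult.commute flip: power_mult)
    have identity: "(c - 1) * P / (Pb * Q * X) * (c / X) ^ a / (Y / X) =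
          c ^ a * (c - 1) * P / (X * X ^ a * Pb) * X / D * (D / (Q * Y))"
      if "P \<noteq> 0" "Q \<noteq> 0" "X \<noteq> 0" "Y \<noteq> 0" "D \<noteq> 0" "Pb \<noteq> 0" for P Q X Y c D Pb :: complex
      using that by (simp add: field_simps power_divide)
    have "(local_factor chi N w r p has_sum
        ((chi p - 1) * P / (P ^ multiplicity p w * (P - 1) * X) * (chi p / X) ^ a / ((X - chi p) / X))) UNIV"
      using local_sum N by simp
    also have "\<dots> = chi p ^ a * (chi p - 1) * P / (X * X ^ a * P ^ multiplicity p w) * X / D *
                     (D / ((P - 1) * (X - chi p)))"
      by (rule identity) (use nonzero power_nonzero in auto)
    also have "\<dots> = c_chi_factor chi N w r p * B_factor chi r p"
      unfolding c_chi_factor_def B h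
      unfolding P_def[symmetric] unfolding D_def[symmetric] unfolding X_def[symmetric] X_power
      using \<open>p \<in> prime_factors N\<close> by simp
    finally show ?thesis
      using N pf_Nw by simp
  next
    case (w b)
    have tot: "of_nat (totient (p ^ multiplicity p w)) = P ^ b * (P - 1)"
      unfolding w P_def using totient_prime_power_Suc[OF p, of b] prime_gt_1_nat[OF p]
      by (simp add: of_nat_diff)
    have identity: "1 / (Pb * Q) + (c - 1) * P / (P * Pb * Q * X) / (Y / X) =
          P / (P * Pb) * ((X - 1) / D) * (D / (Q * Y))"
      if "P \<noteq> 0" "Q \<noteq> 0" "X \<noteq> 0" "Y \<noteq> 0" "D \<noteq> 0" "Pb \<noteq> 0" "c = X - Y"
      for P Q X Y c D Pb :: complex
      using that(1-6) unfolding that(7) by (simp add: field_simps)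
    have "(local_factor chi N w r p has_sum
        (1 / (P ^ b * (P - 1)) + (chi p - 1) * P / (P * P ^ b * (P - 1) * X) / ((X - chi p) / X))) UNIV"
      using local_sum w tot by simp
    also have "\<dots> = P / (P * P ^ b) * ((X - 1) / D) * (D / ((P - 1) * (X - chi p)))"
      by (rule identity) (use nonzero power_nonzero in auto)
    also have "\<dots> = c_chi_factor chi N w r p * B_factor chi r p"
      unfolding c_chi_factor_def B using w pf_N by (simp add: P_def X_def D_def h_chi_1[OF chi])
    finally show ?thesis
      using w pf_Nw by simp
  next
    case none
    have "1 + (c - 1) * P / (1 * Q * X) / (Y / X) = 1 + P * (c - 1) / (Q * Y)"
      if "Q \<noteq> 0" "X \<noteq> 0" "Y \<noteq> 0" for P Q X Y c :: complex
      using that by (simp add: field_simps)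
    then have "(local_factor chi N w r p has_sum B_factor chi r p) UNIV"
      using local_sum none nonzero by (simp add: B_factor_def P_def X_def mult.commute)
    then show ?thesis
      using none pf_Nw by simp
  qed
qed

lemma prod_c_chi_factor:
  assumes chi: "dirichlet_character m chi" and N: "N > 0" and w: "w > 0"
  shows "(\<Prod>p\<in>prime_factors (N * w). c_chi_factor chi N w r p) = c_chi chi N w r"
proof -
  define S where "S = prime_factors (N * w)"
  define X where "X p = (of_nat p :: complex) ^ (r + 1)" for p
  define D where "D p = (of_nat p :: complex) ^ (r + 2) - of_nat p ^ (r + 1) - of_nat p + chi p" for p
  have S: "finite S" "\<forall>p\<in>S. prime p"
    by (simp_all add: S_def in_prime_factors_imp_prime)
  have N_S: "prime_factors N \<subseteq> S" and w_S: "prime_factors w \<subseteq> S"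
    using N w by (auto simp: S_def prime_factors_product)
  have c_chi_factor: "c_chi_factor chi N w r p = h_chi chi (p ^ multiplicity p N) * of_nat p /
      ((of_nat p ^ multiplicity p N) ^ (r + 1) * of_nat p ^ multiplicity p w) *
      (if p \<in> prime_factors N then X p / D p else (X p - 1) / D p)" for p
    unfolding c_chi_factor_def X_def D_def ..
  have "h_chi chi N = (\<Prod>p\<in>S. h_chi chi (p ^ multiplicity p N))"
    using N S N_S
    by (intro multiplicative_eq_prod_multiplicity) (auto simp: h_chi_mult_coprime[OF chi] h_chi_1[OF chi])
  note h = this[symmetric]
  have kappa: "(\<Prod>p\<in>S. (of_nat p :: complex)) = of_nat (kappa (N * w))"
    by (simp add: kappa_def S_def)
  have "(of_nat N :: complex) = of_nat (\<Prod>p\<in>S. p ^ multiplicity p N)"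
    using prod_prime_power_multiplicity_superset[OF N S(1) N_S S(2)] by simp
  then have N_power: "(\<Prod>p\<in>S. ((of_nat p :: complex) ^ multiplicity p N) ^ (r + 1)) = of_nat N ^ (r + 1)"
    by (simp only: of_nat_prod of_nat_power prod_power_distrib)
  have "(of_nat w :: complex) = of_nat (\<Prod>p\<in>S. p ^ multiplicity p w)"
    using prod_prime_power_multiplicity_superset[OF w S(1) w_S S(2)] by simp
  then have w_power: "(\<Prod>p\<in>S. (of_nat p :: complex) ^ multiplicity p w) = of_nat w"
    by (simp only: of_nat_prod of_nat_power)
  have "(\<Prod>p\<in>S. if p \<in> prime_factors N then X p / D p else (X p - 1) / D p) =
      (\<Prod>p\<in>S \<inter> {p. p \<in> prime_factors N}. X p / D p) * (\<Prod>p\<in>S \<inter> - {p. p \<in> prime_factors N}. (X p - 1) / D p)"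
    by (rule prod.If_cases[OF S(1)])
  also have "S \<inter> {p. p \<in> prime_factors N} = prime_factors N"
    using N_S by auto
  also have "S \<inter> - {p. p \<in> prime_factors N} = prime_factors w - prime_factors N"
    using N w by (auto simp: S_def prime_factors_product)
  finally have split: "(\<Prod>p\<in>S. if p \<in> prime_factors N then X p / D p else (X p - 1) / D p) =
      (\<Prod>p\<in>prime_factors N. X p / D p) * (\<Prod>p\<in>prime_factors w - prime_factors N. (X p - 1) / D p)" .
  have "(\<Prod>p\<in>S. c_chi_factor chi N w r p) =
      (\<Prod>p\<in>S. h_chi chi (p ^ multiplicity p N)) * (\<Prod>p\<in>S. of_nat p) /
      ((\<Prod>p\<in>S. (of_nat p ^ multiplicity p N) ^ (r + 1)) * (\<Prod>p\<in>S. of_nat p ^ multiplicity p w)) *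
      (\<Prod>p\<in>S. if p \<in> prime_factors N then X p / D p else (X p - 1) / D p)"
    by (simp only: c_chi_factor prod.distrib prod_dividef)
  also have "\<dots> = c_chi chi N w r"
    unfolding h kappa N_power w_power split unfolding c_chi_def X_def D_def by (simp only: mult.assoc)
  finally show ?thesis
    by (simp add: S_def)
qed

lemma C_summand_Euler_product:
  assumes chi: "dirichlet_character m chi" and "r \<ge> 1" "N > 0" "w > 0"
  shows "C_summand chi N w r summable_on {v. v \<ge> 1}"
    and "(\<lambda>x. \<Prod>p | prime p \<and> p \<le> x. infsum (local_factor chi N w r p) UNIV)
           \<longlonglongrightarrow> infsum (C_summand chi N w r) {v. v \<ge> 1}"
proof -
  have S: "finite (prime_factors (N * w))" "\<forall>p\<in>prime_factors (N * w). prime p"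
    by (simp_all add: in_prime_factors_imp_prime)
  have G: "\<And>P v. finite P \<Longrightarrow> \<forall>p\<in>P. prime p \<Longrightarrow> prime_factors (N * w) \<subseteq> P \<Longrightarrow> v \<in> smooth P \<Longrightarrow>
      C_summand chi N w r v = (\<Prod>p\<in>P. local_factor chi N w r p (multiplicity p v))"
    by (rule C_summand_eq_prod_local_factor[OF chi assms(3,4)])
  have bound: "\<And>p K. prime p \<Longrightarrow> (\<Sum>k\<le>K. norm (local_factor chi N w r p k)) \<le> 1 + 8 / real p ^ 2"
    by (rule sum_norm_local_factor_le[OF chi _ assms(2)])
  show "C_summand chi N w r summable_on {v. v \<ge> 1}"
    by (rule summable_on_Euler_factorization[OF S G bound]) simp_all
  show "(\<lambda>x. \<Prod>p | prime p \<and> p \<le> x. infsum (local_factor chi N w r p) UNIV)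
           \<longlonglongrightarrow> infsum (C_summand chi N w r) {v. v \<ge> 1}"
    by (rule Euler_product[OF S G bound]) simp_all
qed

lemma tendsto_prod_B_factor:
  assumes chi: "dirichlet_character m chi" and "r \<ge> 1"
  shows "(\<lambda>x. \<Prod>p | prime p \<and> p \<le> x. B_factor chi r p) \<longlonglongrightarrow> infsum (C_summand chi 1 1 r) {v. v \<ge> 1}"
proof -
  have "infsum (local_factor chi 1 1 r p) UNIV = B_factor chi r p" if "prime p" for p
  proof (rule infsumI)
    show "(local_factor chi 1 1 r p has_sum B_factor chi r p) UNIV"
      using has_sum_local_factor_eq[OF chi that \<open>r \<ge> 1\<close>, of 1 1] by simp
  qed
  then have "(\<Prod>p | prime p \<and> p \<le> x. infsum (local_factor chi 1 1 r p) UNIV) =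
             (\<Prod>p | prime p \<and> p \<le> x. B_factor chi r p)" for x
    by (intro prod.cong) simp_all
  then show ?thesis
    using C_summand_Euler_product(2)[OF assms, of 1 1] by simp
qed

lemma infsum_C_summand:
  assumes chi: "dirichlet_character m chi" and "r \<ge> 1" "N > 0" "w > 0"
  shows "infsum (C_summand chi N w r) {v. v \<ge> 1} = c_chi chi N w r * infsum (C_summand chi 1 1 r) {v. v \<ge> 1}"
proof -
  define P where "P x = {p. prime p \<and> p \<le> x}" for x :: nat
  define S where "S = prime_factors (N * w)"
  have finite_P: "finite (P x)" for x
    by (simp add: P_def)
  have "(\<lambda>x. c_chi chi N w r * (\<Prod>p\<in>P x. B_factor chi r p)) \<longlonglongrightarrow>
      c_chi chi N w r * infsum (C_summand chi 1 1 r) {v. v \<ge> 1}"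
    unfolding P_def by (intro tendsto_mult_left tendsto_prod_B_factor[OF chi assms(2)])
  moreover have "eventually (\<lambda>x. S \<subseteq> P x) sequentially"
    unfolding P_def S_def by (rule eventually_subset_primes_le) (simp_all add: in_prime_factors_imp_prime)
  then have "eventually (\<lambda>x. c_chi chi N w r * (\<Prod>p\<in>P x. B_factor chi r p) =
                (\<Prod>p\<in>P x. infsum (local_factor chi N w r p) UNIV)) sequentially"
  proof eventually_elim
    case (elim x)
    have "(\<Prod>p\<in>P x. infsum (local_factor chi N w r p) UNIV) =
          (\<Prod>p\<in>P x. (if p \<in> S then c_chi_factor chi N w r p else 1) * B_factor chi r p)"
      using has_sum_local_factor_eq[OF chi _ assms(2-4)] unfolding S_def
      by (intro prod.cong refl infsumI) (simp add: P_def)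
    also have "\<dots> = (\<Prod>p\<in>P x \<inter> S. c_chi_factor chi N w r p) * (\<Prod>p\<in>P x. B_factor chi r p)"
      by (simp only: prod.distrib prod.inter_restrict[OF finite_P])
    also have "P x \<inter> S = S"
      using elim by blast
    finally show ?case
      using prod_c_chi_factor[OF chi assms(3,4)] by (simp add: S_def)
  qed
  ultimately have "(\<lambda>x. \<Prod>p\<in>P x. infsum (local_factor chi N w r p) UNIV) \<longlonglongrightarrow>
      c_chi chi N w r * infsum (C_summand chi 1 1 r) {v. v \<ge> 1}"
    by (rule Lim_transform_eventually)
  with C_summand_Euler_product(2)[OF assms] show ?thesis
    unfolding P_def by (rule LIMSEQ_unique)
qed

theorem lemma3p1:
  fixes chi :: "nat \<Rightarrow> complex" and m N w r :: nat
  assumes "dirichlet_character m chi" and "r \<ge> 1" and "N > 0" and "w > 0"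
  shows "\<exists>B. ((\<lambda>x. \<Prod>p\<in>{p. prime p \<and> p \<le> x}. B_factor chi r p) \<longlonglongrightarrow> B) \<and>
             ((\<lambda>v. h_chi chi v / (of_nat (totient (v * w)) * of_nat v ^ r)) has_sum (c_chi chi N w r * B))
                {v. v \<ge> 1 \<and> N dvd v} \<and>
             C_chi chi N w r = c_chi chi N w r * B \<and>
             ((\<lambda>v. h_chi chi v / (of_nat (totient v) * of_nat v ^ r)) has_sum B) {v. v \<ge> 1}"
proof (intro exI conjI)
  define B where "B = infsum (C_summand chi 1 1 r) {v. v \<ge> 1}"
  show "(\<lambda>x. \<Prod>p\<in>{p. prime p \<and> p \<le> x}. B_factor chi r p) \<longlonglongrightarrow> B"
    unfolding B_def using assms(1,2) by (rule tendsto_prod_B_factor)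
  have "(C_summand chi N w r has_sum c_chi chi N w r * B) {v. v \<ge> 1}"
    using has_sum_infsum[OF C_summand_Euler_product(1)[OF assms]] infsum_C_summand[OF assms]
    by (simp add: B_def)
  then show "((\<lambda>v. h_chi chi v / (of_nat (totient (v * w)) * of_nat v ^ r)) has_sum (c_chi chi N w r * B))
                     {v. v \<ge> 1 \<and> N dvd v}"
    by (simp only: has_sum_C_summand_iff)
  then show "C_chi chi N w r = c_chi chi N w r * B"
    unfolding C_chi_def by (rule infsumI)
  have "(C_summand chi 1 1 r has_sum B) {v. v \<ge> 1}"
    unfolding B_def using assms(1,2) by (intro has_sum_infsum C_summand_Euler_product(1)) simp_all
  then have "((\<lambda>v. h_chi chi v / (of_nat (totient (v * 1)) * of_nat v ^ r)) has_sum B) {v. v \<ge> 1 \<and> 1 dvd v}"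
    by (simp only: has_sum_C_summand_iff)
  then show "((\<lambda>v. h_chi chi v / (of_nat (totient v) * of_nat v ^ r)) has_sum B) {v. v \<ge> 1}"
    by simp
qed

end
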